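(* Let $n$ be a positive integer and let $A(n)=(a_{ij})_{i,j\in\mathbb{N}}$ be the greedy matrix described in the context. For every $k\geq 1$, the length of the $k$-th row of $A(n)$ is less than $2n^3-n(n-3)$.
   Context: $\mathbb{N}=\{1,2,3,\dots\}$. Fix a positive integer $n$. The infinite $\{0,1\}$-matrix $A(n)=(a_{ij})_{i,j\in\mathbb{N}}$ is defined recursively. Its entries are determined row by row (row $1$ first), and within each row from left to right, so that $a_{kl}$ is determined after all $a_{ij}$ with $i<k$ and all $a_{kj}$ with $j<l$. One sets $a_{kl}=1$ if and only if all of the following hold: (1) $\sum_{j<l}a_{kj}<n+1$; (2) $\sum_{i<k}a_{il}<n+1$; (3) there is no pair $(i,j)$ with $1\le i<k$, $1\le j<l$ and $a_{ij}=a_{il}=a_{kj}=1$. Otherwise $a_{kl}=0$. The length of a row $(a_{k1},a_{k2},\dots)$ containing at least one but finitely many ones is $l-f+1$, where $f$ and $l$ are the smallest and the largest column index $j$ with $a_{kj}=1$. *)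

theory Defs
  imports Main
begin

text \<open>The greedy matrix A(n). Indices are 1-based; entries with a zero index are False
(never used). Entry a_kl is True iff it equals 1.\<close>

text \<open>Given the matrix M restricted to rows i < k (entries of rows < k correct),
 greedy_row_prefix n M k l is the list [a_k1, ..., a_kl].\<close>
primrec greedy_row_prefix :: "nat \<Rightarrow> (nat \<Rightarrow> nat \<Rightarrow> bool) \<Rightarrow> nat \<Rightarrow> nat \<Rightarrow> bool list" where
  "greedy_row_prefix n M k 0 = []"
| "greedy_row_prefix n M k (Suc l) =
    (let xs = greedy_row_prefix n M k l;
         c = Suc l;
         b = (length (filter id xs) < n + 1
              \<and> card {i. 1 \<le> i \<and> i < k \<and> M i c} < n + 1
              \<and> \<not> (\<exists>i j. 1 \<le> i \<and> i < k \<and> 1 \<le> j \<and> j < c \<and> M i j \<and> M i c \<and> xs ! (j - 1)))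
     in xs @ [b])"

primrec greedy_upto :: "nat \<Rightarrow> nat \<Rightarrow> (nat \<Rightarrow> nat \<Rightarrow> bool)" where
  "greedy_upto n 0 = (\<lambda>i j. False)"
| "greedy_upto n (Suc k) =
    (\<lambda>i j. if i = Suc k \<and> 1 \<le> j
           then greedy_row_prefix n (greedy_upto n k) (Suc k) j ! (j - 1)
           else greedy_upto n k i j)"

definition greedyA :: "nat \<Rightarrow> nat \<Rightarrow> nat \<Rightarrow> bool" where
  "greedyA n i j = greedy_upto n i i j"

definition row_ones :: "nat \<Rightarrow> nat \<Rightarrow> nat set" where
  "row_ones n k = {j. 1 \<le> j \<and> greedyA n k j}"

definition row_length :: "nat \<Rightarrow> nat \<Rightarrow> nat" where
  "row_length n k = Max (row_ones n k) - Min (row_ones n k) + 1"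

end

theory Submission
  imports Defs
begin

text \<open>
  Let \<open>f\<close> and \<open>l\<close> be the first and last one of row \<open>k\<close>. Row \<open>k\<close> has at most \<open>n + 1\<close> ones, and
  the greedy rule was violated at every other column \<open>f < c < l\<close>: either a one at \<open>(k, c)\<close> would
  complete a rectangle with a one \<open>(k, j)\<close>, \<open>j < c\<close>, or column \<open>c\<close> already holds \<open>n + 1\<close> ones
  above row \<open>k\<close>. The first kind is charged to the triples \<open>j, i, c\<close> with \<open>(k, j)\<close>, \<open>(i, j)\<close>,
  \<open>(i, c)\<close> ones and \<open>j \<noteq> l\<close>, at most \<open>n\<^sup>3\<close> of them. For the second kind, a row \<open>i\<close> having a
  one at \<open>c > f\<close> but none at \<open>f\<close> must have been blocked at \<open>(i, f)\<close> by a rectangle, so it meets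
  some row \<open>i'\<close> with a one at \<open>f\<close> in a column left of \<open>f\<close>; counting through the at most \<open>n\<close>
  rows \<open>i'\<close> bounds the ones in such columns by \<open>n\<^sup>4\<close>, hence there are at most
  \<open>n\<^sup>3 - n\<^sup>2 + n - 1\<close> full columns. Summing gives \<open>2n\<^sup>3 - n\<^sup>2 + 2n\<close>.
\<close>

lemma card_UN_le_mult:
  assumes "finite I" "card I \<le> a" "\<And>i. i \<in> I \<Longrightarrow> card (A i) \<le> b"
  shows "card (\<Union>i\<in>I. A i) \<le> a * b"
proof -
  have "card (\<Union>i\<in>I. A i) \<le> (\<Sum>i\<in>I. card (A i))" by (rule card_UN_le[OF assms(1)])
  also have "\<dots> \<le> card I * b" using sum_bounded_above[of I "\<lambda>i. card (A i)" b] assms(3) by simp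
  also have "\<dots> \<le> a * b" using assms(2) by simp
  finally show ?thesis .
qed

lemma greedy_upto_eq: "greedy_upto n K i j = (i \<le> K \<and> greedyA n i j)"
  unfolding greedyA_def
proof (induction K arbitrary: i)
  case 0
  (* unfolding greedy_upto at a symbolic row makes the simplifier blow up *)
  show ?case by (cases i) (simp_all del: greedy_upto.simps(2))
next
  case (Suc K)
  show ?case
  proof (cases "i = Suc K")
    case False
    then have "greedy_upto n (Suc K) i j = greedy_upto n K i j" by simp
    then show ?thesis using Suc.IH False le_Suc_eq by (simp del: greedy_upto.simps)
  qed simp
qed

lemma length_greedy_row_prefix: "length (greedy_row_prefix n M k l) = l"
  by (induction l) (simp_all add: Let_def)

lemma nth_greedy_row_prefix:
  "j < l \<Longrightarrow> greedy_row_prefix n M k l ! j = greedy_row_prefix n M k (Suc j) ! j"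
proof (induction l)
  case (Suc l)
  then show ?case
    by (cases "j < l") (simp_all add: Let_def nth_append length_greedy_row_prefix less_Suc_eq)
qed simp

lemma greedyA_Suc:
  "greedyA n (Suc k) j = (1 \<le> j \<and> greedy_row_prefix n (greedy_upto n k) (Suc k) j ! (j - 1))"
  using greedy_upto_eq[of n k "Suc k" j] by (simp add: greedyA_def)

lemma greedyA_0_right: "\<not> greedyA n i 0"
  by (cases i) (simp_all add: greedyA_Suc, simp add: greedyA_def)

lemma greedyA_0_left: "\<not> greedyA n 0 j"
  by (simp add: greedyA_def)

definition ones_left :: "nat \<Rightarrow> nat \<Rightarrow> nat \<Rightarrow> nat set" where
  "ones_left n k c = {j. 1 \<le> j \<and> j < c \<and> greedyA n k j}"

definition ones_above :: "nat \<Rightarrow> nat \<Rightarrow> nat \<Rightarrow> nat set" where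
  "ones_above n k c = {i. 1 \<le> i \<and> i < k \<and> greedyA n i c}"

definition completes_rectangle :: "nat \<Rightarrow> nat \<Rightarrow> nat \<Rightarrow> bool" where
  "completes_rectangle n k c \<longleftrightarrow>
     (\<exists>i j. 1 \<le> i \<and> i < k \<and> 1 \<le> j \<and> j < c \<and> greedyA n i j \<and> greedyA n i c \<and> greedyA n k j)"

lemma greedyA_iff:
  assumes "1 \<le> k" "1 \<le> c"
  shows "greedyA n k c \<longleftrightarrow>
    card (ones_left n k c) \<le> n \<and> card (ones_above n k c) \<le> n \<and> \<not> completes_rectangle n k c"
proof -
  obtain k' where k: "k = Suc k'" using assms by (cases k) auto
  obtain c' where c: "c = Suc c'" using assms by (cases c) auto
  define xs where "xs = greedy_row_prefix n (greedy_upto n k') k c'"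
  have xs_nth: "xs ! (j - 1) = greedyA n k j" if "1 \<le> j" "j < c" for j
  proof -
    have "xs ! (j - 1) = greedy_row_prefix n (greedy_upto n k') k (Suc (j - 1)) ! (j - 1)"
      unfolding xs_def using that c by (intro nth_greedy_row_prefix) auto
    then show ?thesis using that k by (simp add: greedyA_Suc)
  qed
  have above: "greedy_upto n k' i j = greedyA n i j" if "i < k" for i j
    using that k by (simp add: greedy_upto_eq)
  have "ones_left n k c = Suc ` {t. t < c' \<and> xs ! t}"
  proof (intro set_eqI iffI)
    fix j assume "j \<in> ones_left n k c"
    then have "1 \<le> j" "j < c" "greedyA n k j" unfolding ones_left_def by auto
    then show "j \<in> Suc ` {t. t < c' \<and> xs ! t}"
      using xs_nth c by (intro image_eqI[of j _ "j - 1"]) auto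
  next
    fix j assume "j \<in> Suc ` {t. t < c' \<and> xs ! t}"
    then obtain t where "j = Suc t" "t < c'" "xs ! t" by auto
    then show "j \<in> ones_left n k c" using xs_nth[of j] c unfolding ones_left_def by auto
  qed
  then have "length (filter id xs) = card (ones_left n k c)"
    by (simp add: card_image length_filter_conv_card xs_def length_greedy_row_prefix)
  moreover have "{i. 1 \<le> i \<and> i < k \<and> greedy_upto n k' i c} = ones_above n k c"
    using above unfolding ones_above_def by auto
  moreover have "greedyA n k c = greedy_row_prefix n (greedy_upto n k') k c ! c'"
    using k c by (simp add: greedyA_Suc)
  ultimately have "greedyA n k c \<longleftrightarrow> card (ones_left n k c) < n + 1 \<and> card (ones_above n k c) < n + 1
      \<and> \<not> (\<exists>i j. 1 \<le> i \<and> i < k \<and> 1 \<le> j \<and> j < c \<and> greedy_upto n k' i j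
              \<and> greedy_upto n k' i c \<and> xs ! (j - 1))"
    using c k by (simp add: Let_def nth_append length_greedy_row_prefix xs_def)
  then show ?thesis
    unfolding completes_rectangle_def using above xs_nth by (metis Suc_eq_plus1 less_Suc_eq_le)
qed

lemma greedyA_D:
  assumes "greedyA n k c"
  shows "1 \<le> k" "1 \<le> c" "card (ones_left n k c) \<le> n" "card (ones_above n k c) \<le> n"
    "\<not> completes_rectangle n k c"
proof -
  show k: "1 \<le> k" and c: "1 \<le> c"
    using assms greedyA_0_left greedyA_0_right by (metis less_one not_less)+
  show "card (ones_left n k c) \<le> n" "card (ones_above n k c) \<le> n" "\<not> completes_rectangle n k c"
    using assms greedyA_iff[OF k c] by simp_all
qed

lemma finite_ones_left [simp]: "finite (ones_left n k c)"
  by (rule finite_subset[of _ "{..<c}"]) (auto simp: ones_left_def)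

lemma finite_ones_above [simp]: "finite (ones_above n k c)"
  by (rule finite_subset[of _ "{..<k}"]) (auto simp: ones_above_def)

lemma card_ones_above_le: "card (ones_above n k c) \<le> Suc n"
proof (cases "ones_above n k c = {}")
  case False
  define i where "i = Max (ones_above n k c)"
  have i: "i \<in> ones_above n k c" using False by (simp add: i_def)
  then have "card (ones_above n i c) \<le> n" by (intro greedyA_D) (simp add: ones_above_def)
  moreover have "ones_above n k c \<subseteq> insert i (ones_above n i c)"
  proof
    fix x assume x: "x \<in> ones_above n k c"
    then have "x \<le> i" by (simp add: i_def)
    with x show "x \<in> insert i (ones_above n i c)" by (auto simp: ones_above_def)
  qed
  then have "card (ones_above n k c) \<le> card (insert i (ones_above n i c))"
    by (intro card_mono) simp_all
  ultimately show ?thesis by (simp add: card_insert_if split: if_splits)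
qed simp

lemma card_le_Suc_if_subset_row_ones:
  assumes "finite B" "B \<subseteq> row_ones n k"
  shows "card B \<le> Suc n"
proof (cases "B = {}")
  case False
  define j where "j = Max B"
  have "j \<in> row_ones n k" using Max_in[OF assms(1) False] assms(2) by (auto simp: j_def)
  then have "card (ones_left n k j) \<le> n" by (intro greedyA_D) (simp add: row_ones_def)
  moreover have "B \<subseteq> insert j (ones_left n k j)"
  proof
    fix x assume x: "x \<in> B"
    then have "x \<le> j" using assms(1) by (simp add: j_def)
    with x assms(2) show "x \<in> insert j (ones_left n k j)" by (auto simp: ones_left_def row_ones_def)
  qed
  then have "card B \<le> card (insert j (ones_left n k j))"
    by (intro card_mono) simp_all
  ultimately show ?thesis by (simp add: card_insert_if split: if_splits)
qed simp

lemma finite_row_ones [simp]: "finite (row_ones n k)"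
proof (rule ccontr)
  assume "infinite (row_ones n k)"
  then obtain B where "finite B" "card B = Suc (Suc n)" "B \<subseteq> row_ones n k"
    using infinite_arbitrarily_large by blast
  then show False using card_le_Suc_if_subset_row_ones by fastforce
qed

lemma card_row_ones_le: "card (row_ones n k) \<le> Suc n"
  by (rule card_le_Suc_if_subset_row_ones[of _ n k]) simp_all

lemma finite_columns_with_ones_above: "finite {c. ones_above n k c \<noteq> {}}"
proof (rule finite_subset)
  show "{c. ones_above n k c \<noteq> {}} \<subseteq> (\<Union>i<k. row_ones n i)"
  proof
    fix c assume "c \<in> {c. ones_above n k c \<noteq> {}}"
    then obtain i where "i \<in> ones_above n k c" by auto
    then have "i < k" "greedyA n i c" by (simp_all add: ones_above_def)
    then show "c \<in> (\<Union>i<k. row_ones n i)" using greedyA_D(2) by (auto simp: row_ones_def)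
  qed
qed simp

lemma row_ones_nonempty:
  assumes "1 \<le> k"
  shows "row_ones n k \<noteq> {}"
proof
  assume empty: "row_ones n k = {}"
  obtain c where "c \<notin> insert 0 {c. ones_above n k c \<noteq> {}}"
    using ex_new_if_finite[OF infinite_UNIV_nat finite_insert[THEN iffD2, OF finite_columns_with_ones_above]]
    by blast
  then have c: "1 \<le> c" and "ones_above n k c = {}" by auto
  then have "\<not> completes_rectangle n k c"
    unfolding completes_rectangle_def ones_above_def by blast
  moreover have "ones_left n k c = {}" using empty by (auto simp: row_ones_def ones_left_def)
  ultimately have "greedyA n k c"
    using greedyA_iff[OF assms c] \<open>ones_above n k c = {}\<close> by simp
  then show False using empty c by (auto simp: row_ones_def)
qed

definition ones_right :: "nat \<Rightarrow> nat \<Rightarrow> nat \<Rightarrow> nat set" where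
  "ones_right n i f = {c \<in> row_ones n i. f < c}"

lemma finite_ones_right [simp]: "finite (ones_right n i f)"
  by (simp add: ones_right_def)

lemma card_ones_right_le:
  assumes "j \<in> row_ones n i" "j \<le> f"
  shows "card (ones_right n i f) \<le> n"
proof -
  have "card (ones_right n i f) \<le> card (row_ones n i - {j})"
    using assms by (intro card_mono) (auto simp: ones_right_def)
  also have "\<dots> \<le> n" using assms(1) card_row_ones_le[of n i] by simp
  finally show ?thesis .
qed

lemma gap_column_completes_or_full:
  assumes "l \<in> row_ones n k" "1 \<le> c" "c < l" "c \<notin> row_ones n k"
  shows "completes_rectangle n k c \<or> n < card (ones_above n k c)"
proof -
  have l: "greedyA n k l" using assms(1) by (simp add: row_ones_def)
  have "ones_left n k c \<subseteq> ones_left n k l" using assms(3) by (auto simp: ones_left_def)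
  then have "card (ones_left n k c) \<le> card (ones_left n k l)" by (intro card_mono) simp_all
  also have "\<dots> \<le> n" using l by (rule greedyA_D)
  finally have "card (ones_left n k c) \<le> n" .
  moreover have "\<not> greedyA n k c" using assms(2,4) by (simp add: row_ones_def)
  ultimately show ?thesis using greedyA_iff[OF greedyA_D(1)[OF l] assms(2)] by (auto simp: not_le)
qed

lemma card_completing_columns_le:
  assumes "l \<in> row_ones n k"
  shows "card {c. c < l \<and> completes_rectangle n k c} \<le> n ^ 3"
proof -
  let ?U = "\<Union>j\<in>row_ones n k - {l}. \<Union>i\<in>ones_above n k j. ones_right n i j"
  have "finite ?U" by (intro finite_UN_I) simp_all
  have "{c. c < l \<and> completes_rectangle n k c} \<subseteq> ?U"
  proof
    fix c assume "c \<in> {c. c < l \<and> completes_rectangle n k c}"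
    then obtain i j where "c < l" "1 \<le> i" "i < k" "1 \<le> j" "j < c"
      and "greedyA n i j" "greedyA n i c" "greedyA n k j"
      unfolding completes_rectangle_def by blast
    then have "j \<in> row_ones n k - {l}" "i \<in> ones_above n k j" "c \<in> ones_right n i j"
      by (simp_all add: row_ones_def ones_above_def ones_right_def)
    then show "c \<in> ?U" by blast
  qed
  then have "card {c. c < l \<and> completes_rectangle n k c} \<le> card ?U"
    using \<open>finite ?U\<close> by (intro card_mono)
  also have "card ?U \<le> n * (n * n)"
  proof (rule card_UN_le_mult)
    show "card (row_ones n k - {l}) \<le> n" using assms card_row_ones_le[of n k] by simp
  next
    fix j assume j: "j \<in> row_ones n k - {l}"
    show "card (\<Union>i\<in>ones_above n k j. ones_right n i j) \<le> n * n"
    proof (rule card_UN_le_mult)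
      show "card (ones_above n k j) \<le> n" using j by (intro greedyA_D) (simp add: row_ones_def)
      show "card (ones_right n i j) \<le> n" if "i \<in> ones_above n k j" for i
        using that greedyA_D(2) by (intro card_ones_right_le[of j]) (auto simp: ones_above_def row_ones_def)
    qed simp
  qed simp
  finally show ?thesis by (simp add: power3_eq_cube)
qed

lemma blocking_row_in_column:
  assumes f: "f \<in> row_ones n k" and i: "i \<in> ones_above n k c" and "f < c" and "\<not> greedyA n i f"
  shows "\<exists>i' \<in> ones_above n k f. \<exists>j \<in> row_ones n i'. j < f \<and> i \<in> ones_above n k j - {i'}"
proof -
  have "1 \<le> i" "i < k" "greedyA n i c" "1 \<le> f" "greedyA n k f"
    using i f greedyA_D(2) by (auto simp: ones_above_def row_ones_def)
  have "card (ones_left n i f) \<le> n"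
    using card_mono[of "ones_left n i c" "ones_left n i f"] greedyA_D(3)[OF \<open>greedyA n i c\<close>] \<open>f < c\<close>
    by (force simp: ones_left_def)
  moreover have "card (ones_above n i f) \<le> n"
    using card_mono[of "ones_above n k f" "ones_above n i f"] greedyA_D(4)[OF \<open>greedyA n k f\<close>] \<open>i < k\<close>
    by (force simp: ones_above_def)
  ultimately have "completes_rectangle n i f"
    using greedyA_iff[OF \<open>1 \<le> i\<close> \<open>1 \<le> f\<close>] assms(4) by blast
  then show ?thesis
    using \<open>i < k\<close> \<open>1 \<le> i\<close>
    by (auto simp: completes_rectangle_def ones_above_def row_ones_def)
qed

text \<open>By \<open>blocking_row_in_column\<close>, as \<open>i'\<close> ranges over the ones of column \<open>f\<close> above row \<open>k\<close>,
  these sets cover all ones above row \<open>k\<close> to the right of \<open>f\<close>.\<close>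
definition linked_pairs :: "nat \<Rightarrow> nat \<Rightarrow> nat \<Rightarrow> nat \<Rightarrow> (nat \<times> nat) set" where
  "linked_pairs n k f i' = ones_right n i' f \<times> {i'} \<union>
     (\<Union>j \<in> {j \<in> row_ones n i'. j < f}. \<Union>i \<in> ones_above n k j - {i'}. ones_right n i f \<times> {i})"

lemma card_linked_pairs_le:
  assumes i': "i' \<in> ones_above n k f"
  shows "card (linked_pairs n k f i') \<le> n ^ 3"
proof -
  define X where "X = ones_right n i' f"
  define M where "M = {j \<in> row_ones n i'. j < f}"
  define Y where "Y = (\<Union>j\<in>M. \<Union>i\<in>ones_above n k j - {i'}. ones_right n i f \<times> {i})"
  have "f \<in> row_ones n i'" using i' greedyA_D(2) by (auto simp: ones_above_def row_ones_def)
  have "X \<union> M \<subseteq> row_ones n i' - {f}" by (auto simp: X_def M_def ones_right_def)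
  then have "card (X \<union> M) \<le> card (row_ones n i' - {f})" by (intro card_mono) simp_all
  also have "\<dots> \<le> n" using card_row_ones_le[of n i'] \<open>f \<in> row_ones n i'\<close> by simp
  also have "card (X \<union> M) = card X + card M"
    by (rule card_Un_disjoint) (auto simp: X_def M_def ones_right_def)
  finally have XM: "card X + card M \<le> n" .
  have "card Y \<le> card M * (n * n)"
    unfolding Y_def
  proof (rule card_UN_le_mult)
    fix j assume j: "j \<in> M"
    then have "i' \<in> ones_above n k j" using i' by (simp add: M_def ones_above_def row_ones_def)
    then have "card (ones_above n k j - {i'}) \<le> n" using card_ones_above_le[of n k j] by simp
    moreover have "card (ones_right n i f \<times> {i}) \<le> n" if "i \<in> ones_above n k j - {i'}" for i
      using that j card_ones_right_le[of j n i f] greedyA_D(2)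
      by (auto simp: M_def ones_above_def row_ones_def card_cartesian_product)
    ultimately show "card (\<Union>i\<in>ones_above n k j - {i'}. ones_right n i f \<times> {i}) \<le> n * n"
      by (intro card_UN_le_mult) simp_all
  qed (simp_all add: M_def)
  have "card (linked_pairs n k f i') \<le> card (X \<times> {i'}) + card Y"
    unfolding linked_pairs_def X_def Y_def M_def by (rule card_Un_le)
  also have "\<dots> \<le> card X + card M * (n * n)"
    using \<open>card Y \<le> _\<close> by (simp add: card_cartesian_product)
  also have "\<dots> \<le> (card X + card M) * (n * n)"
    using XM by (cases n) (simp_all add: algebra_simps)
  also have "\<dots> \<le> n ^ 3"
    using XM by (simp add: power3_eq_cube)
  finally show ?thesis .
qed

lemma card_full_columns_le:
  assumes f: "f \<in> row_ones n k"
  shows "card {c. f < c \<and> n < card (ones_above n k c)} * Suc n \<le> n ^ 4"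
proof -
  define F where "F = {c. f < c \<and> n < card (ones_above n k c)}"
  let ?U = "\<Union>i'\<in>ones_above n k f. linked_pairs n k f i'"
  have "finite F"
    by (rule finite_subset[OF _ finite_columns_with_ones_above[of n k]]) (auto simp: F_def)
  have "Sigma F (ones_above n k) \<subseteq> ?U"
  proof clarify
    fix c i assume c: "c \<in> F" and i: "i \<in> ones_above n k c"
    then have "greedyA n i c" "f < c" by (simp_all add: F_def ones_above_def)
    then have right: "c \<in> ones_right n i f" using greedyA_D(2) by (simp add: ones_right_def row_ones_def)
    show "(c, i) \<in> ?U"
    proof (cases "greedyA n i f")
      case True
      then have "i \<in> ones_above n k f" using i by (simp add: ones_above_def)
      then show ?thesis using right by (auto simp: linked_pairs_def)
    next
      case False
      with blocking_row_in_column[OF f i \<open>f < c\<close>]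
      obtain i' j where "i' \<in> ones_above n k f" "j \<in> row_ones n i'" "j < f" "i \<in> ones_above n k j - {i'}"
        by blast
      then show ?thesis using right unfolding linked_pairs_def by blast
    qed
  qed
  then have "card (Sigma F (ones_above n k)) \<le> card ?U"
    by (intro card_mono) (simp_all add: linked_pairs_def)
  also have "\<dots> \<le> n * n ^ 3"
  proof (rule card_UN_le_mult)
    show "card (ones_above n k f) \<le> n" using f by (intro greedyA_D) (simp add: row_ones_def)
  qed (simp_all add: card_linked_pairs_le)
  finally have "card (Sigma F (ones_above n k)) \<le> n ^ 4" by (simp add: power_Suc[symmetric] del: power_Suc)
  moreover have "card F * Suc n \<le> card (Sigma F (ones_above n k))"
    using sum_bounded_below[of F "Suc n" "\<lambda>c. card (ones_above n k c)"] \<open>finite F\<close>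
    by (simp add: F_def Suc_le_eq)
  ultimately show ?thesis by (simp add: F_def)
qed

lemma int_lt_of_mult_Suc_le_pow4:
  fixes x n :: nat
  assumes "1 \<le> n" "x * Suc n \<le> n ^ 4"
  shows "int x < int n ^ 3 - int n ^ 2 + int n"
proof (rule ccontr)
  assume "\<not> ?thesis"
  then have "(int n ^ 3 - int n ^ 2 + int n) * (int n + 1) \<le> int x * (int n + 1)"
    by (intro mult_right_mono) simp_all
  also have "\<dots> = int (x * Suc n)" by (simp add: algebra_simps)
  also have "\<dots> \<le> int (n ^ 4)" using assms(2) by (simp only: of_nat_le_iff)
  finally show False using assms(1) by (simp add: algebra_simps eval_nat_numeral)
qed

lemma row_length_le:
  assumes "1 \<le> k"
  shows "row_length n k \<le> Suc n + n ^ 3 + card {c. Min (row_ones n k) < c \<and> n < card (ones_above n k c)}"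
proof -
  let ?R = "row_ones n k"
  define f where "f = Min ?R"
  define l where "l = Max ?R"
  let ?B = "{c. c < l \<and> completes_rectangle n k c}"
  let ?F = "{c. f < c \<and> n < card (ones_above n k c)}"
  have "f \<in> ?R" "l \<in> ?R" "f \<le> l"
    using row_ones_nonempty[OF assms] by (simp_all add: f_def l_def)
  have "{f..l} \<subseteq> ?R \<union> ?B \<union> ?F"
  proof
    fix c assume c: "c \<in> {f..l}"
    show "c \<in> ?R \<union> ?B \<union> ?F"
    proof (cases "c \<in> ?R")
      case False
      then have "f < c" "c < l" using c \<open>f \<in> ?R\<close> \<open>l \<in> ?R\<close> by (auto simp: order_le_less)
      moreover have "1 \<le> c" using \<open>f \<in> ?R\<close> \<open>f < c\<close> by (simp add: row_ones_def)
      ultimately show ?thesis using gap_column_completes_or_full[OF \<open>l \<in> ?R\<close> _ _ False] by auto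
    qed simp
  qed
  moreover have "finite ?B" by (rule finite_subset[of _ "{..<l}"]) auto
  moreover have "finite ?F"
    by (rule finite_subset[OF _ finite_columns_with_ones_above[of n k]]) auto
  ultimately have "card {f..l} \<le> card (?R \<union> ?B \<union> ?F)"
    by (intro card_mono) simp_all
  also have "\<dots> \<le> card ?R + card ?B + card ?F"
    using card_Un_le[of "?R \<union> ?B" ?F] card_Un_le[of ?R ?B] by linarith
  also have "\<dots> \<le> Suc n + n ^ 3 + card ?F"
    using card_row_ones_le[of n k] card_completing_columns_le[OF \<open>l \<in> ?R\<close>] by linarith
  also have "card {f..l} = row_length n k"
    using \<open>f \<le> l\<close> by (simp add: row_length_def f_def l_def)
  finally show ?thesis by (simp add: f_def)
qed

theorem theorem3p1:
  fixes n k :: nat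
  assumes "n \<ge> 1" and "k \<ge> 1"
  shows "row_ones n k \<noteq> {} \<and> finite (row_ones n k)
         \<and> int (row_length n k) < 2 * int n ^ 3 - int n * (int n - 3)"
proof -
  let ?F = "{c. Min (row_ones n k) < c \<and> n < card (ones_above n k c)}"
  have ne: "row_ones n k \<noteq> {}" using row_ones_nonempty[OF assms(2)] .
  have "int (row_length n k) \<le> int n + 1 + int n ^ 3 + int (card ?F)"
    using row_length_le[OF assms(2), of n] by (simp flip: of_nat_power)
  moreover have "int (card ?F) < int n ^ 3 - int n ^ 2 + int n"
    using ne by (intro int_lt_of_mult_Suc_le_pow4 assms(1) card_full_columns_le) simp
  moreover have "int n * (int n - 3) = int n ^ 2 - 3 * int n"
    by (simp add: power2_eq_square algebra_simps)
  ultimately show ?thesis using ne assms(1) by simp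
qed

end
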